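(* Let $\mathcal{G}=\langle\mathcal{Q},\mathbf{f}\rangle$ be a monotone NEP satisfying Assumption 2, with nonempty set of Nash equilibria, and let $\tau>0$ be such that $\boldsymbol{\Upsilon}_{\mathbf{F}_{\tau,\mathbf{y}}}$ is a P-matrix for every $\mathbf{y}$ (so $\mathcal{G}_{\tau,\mathbf{y}}$ has a unique NE $\mathbf{S}_\tau(\mathbf{y})$). Let $\{\varepsilon^{(n)}\}\subset[0,\infty)$ with $\sum_n\varepsilon^{(n)}<\infty$ and $\{\eta^{(n)}\}\subset[R_m,R_M]$ with $0<R_m\le R_M<2$. Consider any sequence defined by $\mathbf{x}^{(0)}\in\mathcal{Q}$ and, for $n\ge0$, $\mathbf{x}^{(n+1)}=(1-\eta^{(n)})\mathbf{x}^{(n)}+\eta^{(n)}\mathbf{z}^{(n)}$, where $\mathbf{z}^{(n)}$ is any point with $\|\mathbf{z}^{(n)}-\mathbf{S}_\tau(\mathbf{x}^{(n)})\|\le\varepsilon^{(n)}$. Then $\{\mathbf{x}^{(n)}\}$ converges to a NE of $\mathcal{G}$.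
   Context: Real NEP: player $i$ chooses $\mathbf{x}_i\in\mathcal{Q}_i\subseteq\mathbb{R}^{n_i}$ minimizing $f_i(\mathbf{x}_i,\mathbf{x}_{-i})$; $\mathcal{Q}=\prod_i\mathcal{Q}_i$. NE: $\mathbf{x}^\star\in\mathcal{Q}$ with $f_i(\mathbf{x}^\star_i,\mathbf{x}^\star_{-i})\le f_i(\mathbf{x}_i,\mathbf{x}^\star_{-i})$ for all $\mathbf{x}_i\in\mathcal{Q}_i$, all $i$. Assumption 1: $\mathcal{Q}_i$ nonempty closed convex, $f_i$ continuously differentiable on $\mathcal{Q}$ and convex in $\mathbf{x}_i$. Assumption 2: $f_i$ twice continuously differentiable with bounded derivatives on $\mathcal{Q}$. Monotone NEP: Assumption 1 and $\mathbf{F}(\mathbf{x})=(\nabla_{\mathbf{x}_i}f_i(\mathbf{x}))_i$ monotone on $\mathcal{Q}$. $\mathcal{G}_{\tau,\mathbf{y}}$: game where player $i$ minimizes $f_i(\mathbf{x}_i,\mathbf{x}_{-i})+\frac\tau2\|\mathbf{x}_i-\mathbf{y}_i\|^2$ over $\mathcal{Q}_i$, with gradient map $\mathbf{F}_{\tau,\mathbf{y}}=\mathbf{F}+\tau(\cdot-\mathbf{y})$. $\boldsymbol{\Upsilon}_{\mathbf{G}}$ for partitioned $\mathbf{G}$: diagonal $\inf_{\mathcal{Q}}\lambda_{\rm least}(\mathbf{J}_i\mathbf{G}_i)$, off-diagonal $-\sup_{\mathcal{Q}}\|\mathbf{J}_j\mathbf{G}_i\|_2$, $\lambda_{\rm least}(\mathbf{A})$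 smallest eigenvalue of $(\mathbf{A}+\mathbf{A}^T)/2$. P-matrix: all principal minors positive. *)

theory Defs
  imports "HOL-Analysis.Analysis"
begin

text \<open>Strategy profiles live in real^'n; the coordinates are partitioned among the
players 'i by the block map p :: 'n => 'i (player i owns coordinates {k. p k = i}).
A player's strategy set Q_i is represented as a set of vectors supported on block i.\<close>

definition blockset :: "('n \<Rightarrow> 'i) \<Rightarrow> 'i \<Rightarrow> 'n set" where
  "blockset p i = {k. p k = i}"

definition blk :: "('n::finite \<Rightarrow> 'i) \<Rightarrow> 'i \<Rightarrow> real^'n \<Rightarrow> real^'n" where
  "blk p i x = (\<chi> k. if p k = i then x $ k else 0)"

definition upd :: "('n::finite \<Rightarrow> 'i) \<Rightarrow> 'i \<Rightarrow> real^'n \<Rightarrow> real^'n \<Rightarrow> real^'n" where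
  "upd p i x v = (\<chi> k. if p k = i then v $ k else x $ k)"

definition prof_set :: "('n::finite \<Rightarrow> 'i) \<Rightarrow> ('i \<Rightarrow> (real^'n) set) \<Rightarrow> (real^'n) set" where
  "prof_set p Qi = {x. \<forall>i. blk p i x \<in> Qi i}"

definition is_NE :: "('n::finite \<Rightarrow> 'i) \<Rightarrow> ('i \<Rightarrow> (real^'n) set) \<Rightarrow> ('i \<Rightarrow> real^'n \<Rightarrow> real)
    \<Rightarrow> real^'n \<Rightarrow> bool" where
  "is_NE p Qi f x \<longleftrightarrow> x \<in> prof_set p Qi \<and> (\<forall>i. \<forall>v\<in>Qi i. f i x \<le> f i (upd p i x v))"

definition reg_game :: "('n::finite \<Rightarrow> 'i) \<Rightarrow> real \<Rightarrow> real^'n \<Rightarrow> ('i \<Rightarrow> real^'n \<Rightarrow> real)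
    \<Rightarrow> 'i \<Rightarrow> real^'n \<Rightarrow> real" where
  "reg_game p \<tau> y f = (\<lambda>i x. f i x + \<tau> / 2 * (norm (blk p i x - blk p i y))^2)"

text \<open>F(x) = (grad_{x_i} f_i(x))_i, from the full gradients Df i of the f i.\<close>
definition pgrad :: "('n::finite \<Rightarrow> 'i) \<Rightarrow> ('i \<Rightarrow> real^'n \<Rightarrow> real^'n) \<Rightarrow> real^'n \<Rightarrow> real^'n" where
  "pgrad p Df x = (\<chi> k. Df (p k) x $ k)"

text \<open>Jacobian of F, from the Hessians Hf i of the f i.\<close>
definition pjac :: "('n::finite \<Rightarrow> 'i) \<Rightarrow> ('i \<Rightarrow> real^'n \<Rightarrow> real^'n^'n) \<Rightarrow> real^'n \<Rightarrow> real^'n^'n" where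
  "pjac p Hf x = (\<chi> k l. Hf (p k) x $ k $ l)"

definition sym_eigs :: "'n set \<Rightarrow> ('n \<Rightarrow> 'n \<Rightarrow> real) \<Rightarrow> real set" where
  "sym_eigs B A = {lam. \<exists>v. (\<exists>k\<in>B. v k \<noteq> 0) \<and>
      (\<forall>k\<in>B. (\<Sum>l\<in>B. (A k l + A l k) / 2 * v l) = lam * v k)}"

definition lam_least :: "'n set \<Rightarrow> ('n \<Rightarrow> 'n \<Rightarrow> real) \<Rightarrow> real" where
  "lam_least B A = Inf (sym_eigs B A)"

definition norm2 :: "'n set \<Rightarrow> 'n set \<Rightarrow> ('n \<Rightarrow> 'n \<Rightarrow> real) \<Rightarrow> real" where
  "norm2 Bi Bj A = Sup {sqrt (\<Sum>k\<in>Bi. (\<Sum>l\<in>Bj. A k l * v l)^2) | v. (\<Sum>l\<in>Bj. (v l)^2) \<le> 1}"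

definition Upsilon :: "('n::finite \<Rightarrow> 'i) \<Rightarrow> (real^'n) set \<Rightarrow> (real^'n \<Rightarrow> real^'n^'n)
    \<Rightarrow> 'i \<Rightarrow> 'i \<Rightarrow> real" where
  "Upsilon p Q J = (\<lambda>i j. if i = j
      then (INF x\<in>Q. lam_least (blockset p i) (\<lambda>k l. J x $ k $ l))
      else - (SUP x\<in>Q. norm2 (blockset p i) (blockset p j) (\<lambda>k l. J x $ k $ l)))"

definition det_on :: "'i set \<Rightarrow> ('i \<Rightarrow> 'i \<Rightarrow> real) \<Rightarrow> real" where
  "det_on S A = (\<Sum>\<sigma> | \<sigma> permutes S. of_int (sign \<sigma>) * (\<Prod>i\<in>S. A i (\<sigma> i)))"

definition P_matrix :: "('i::finite \<Rightarrow> 'i \<Rightarrow> real) \<Rightarrow> bool" where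
  "P_matrix M \<longleftrightarrow> (\<forall>S. S \<noteq> {} \<longrightarrow> det_on S M > 0)"

end

theory Submission
  imports Defs
begin

text \<open>
  Both the Nash equilibria of the game and those of the regularized game G_{tau,y} are the
  solutions of variational inequalities over Q: for F = pgrad p Df and for
  F + tau (. - y), respectively, since every cost is convex and differentiable in its own
  block. F is monotone, and Lipschitz on Q because the Hessians are bounded, so the
  regularized inequality is strongly monotone and has a unique solution S(y). The map S
  is the proximal map of F: it is firmly nonexpansive, and its fixed points are the
  equilibria of the game. The scheme is thus an inexact Krasnosel'skii-Mann iteration of
  a firmly nonexpansive map with summable errors, which converges to a fixed point (a
  quasi-Fejer argument). Strong monotonicity alone gives uniqueness of S(y).
\<close>

section \<open>Variational inequalities\<close>

lemma has_derivative_at_right_quotient: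
  fixes \<phi> :: "'a::real_normed_vector \<Rightarrow> real"
  assumes "(\<phi> has_derivative \<phi>') (at a)"
  shows "((\<lambda>t. (\<phi> (a + t *\<^sub>R h) - \<phi> a) / t) \<longlongrightarrow> \<phi>' h) (at_right 0)"
proof -
  have lin: "linear \<phi>'" using assms by (simp add: has_derivative_linear)
  have line: "((\<lambda>t::real. a + t *\<^sub>R h) has_derivative (\<lambda>t. t *\<^sub>R h)) (at 0)"
    by (auto intro!: derivative_eq_intros)
  have "((\<lambda>t. \<phi> (a + t *\<^sub>R h)) has_derivative (\<lambda>t. \<phi>' (t *\<^sub>R h))) (at 0)"
    using has_derivative_compose[OF line, of \<phi> \<phi>'] assms by (simp add: o_def)
  then have "((\<lambda>t. \<phi> (a + t *\<^sub>R h)) has_field_derivative \<phi>' h) (at 0)"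
    by (simp add: has_field_derivative_def linear_scale[OF lin] mult_commute_abs)
  then have "((\<lambda>t. (\<phi> (a + t *\<^sub>R h) - \<phi> a) / t) \<longlongrightarrow> \<phi>' h) (at 0)"
    by (simp add: DERIV_def)
  then show ?thesis by (rule filterlim_mono) (simp_all add: at_le)
qed

lemma convex_min_iff_variational_inequality:
  fixes \<phi> :: "'a::real_normed_vector \<Rightarrow> real"
  assumes K: "convex K" "a \<in> K" and der: "(\<phi> has_derivative \<phi>') (at a)"
    and cvx: "convex_on K \<phi>"
  shows "(\<forall>v\<in>K. \<phi> a \<le> \<phi> v) \<longleftrightarrow> (\<forall>v\<in>K. 0 \<le> \<phi>' (v - a))"
proof (intro iffI ballI)
  fix v assume min: "\<forall>v\<in>K. \<phi> a \<le> \<phi> v" and v: "v \<in> K"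
  show "0 \<le> \<phi>' (v - a)"
  proof (rule tendsto_lowerbound[OF has_derivative_at_right_quotient[OF der]])
    have "0 \<le> (\<phi> (a + t *\<^sub>R (v - a)) - \<phi> a) / t" if "0 < t" "t < 1" for t
    proof -
      have "a + t *\<^sub>R (v - a) = (1 - t) *\<^sub>R a + t *\<^sub>R v" by (simp add: algebra_simps)
      then have "a + t *\<^sub>R (v - a) \<in> K" using convexD_alt[OF K(1,2) v, of t] that by simp
      then show ?thesis using min that by simp
    qed
    then show "\<forall>\<^sub>F t in at_right 0. 0 \<le> (\<phi> (a + t *\<^sub>R (v - a)) - \<phi> a) / t"
      unfolding eventually_at_right_field by (intro exI[of _ 1]) simp
  qed simp
next
  fix v assume vi: "\<forall>v\<in>K. 0 \<le> \<phi>' (v - a)" and v: "v \<in> K"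
  have "\<phi>' (v - a) \<le> \<phi> v - \<phi> a"
  proof (rule tendsto_upperbound[OF has_derivative_at_right_quotient[OF der]])
    have "(\<phi> (a + t *\<^sub>R (v - a)) - \<phi> a) / t \<le> \<phi> v - \<phi> a" if "0 < t" "t < 1" for t
    proof -
      have "a + t *\<^sub>R (v - a) = (1 - t) *\<^sub>R a + t *\<^sub>R v" by (simp add: algebra_simps)
      then have "\<phi> (a + t *\<^sub>R (v - a)) \<le> (1 - t) * \<phi> a + t * \<phi> v"
        using convex_onD[OF cvx, of t a v] that K(2) v by simp
      then have "\<phi> (a + t *\<^sub>R (v - a)) - \<phi> a \<le> t * (\<phi> v - \<phi> a)"
        by (simp add: algebra_simps)
      then show ?thesis using that by (simp add: divide_le_eq mult.commute)
    qed
    then show "\<forall>\<^sub>F t in at_right 0. (\<phi> (a + t *\<^sub>R (v - a)) - \<phi> a) / t \<le> \<phi> v - \<phi> a"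
      unfolding eventually_at_right_field by (intro exI[of _ 1]) simp
  qed simp
  then show "\<phi> a \<le> \<phi> v" using vi v by fastforce
qed

lemma convex_on_power2_norm_linear_diff:
  fixes A :: "'a::real_vector \<Rightarrow> 'b::real_inner"
  assumes "linear A" "convex S"
  shows "convex_on S (\<lambda>v. (norm (A v - c))\<^sup>2)"
proof (rule convex_onI[OF _ assms(2)])
  fix t :: real and x y assume t: "0 < t" "t < 1"
  define a b where "a = A x - c" and "b = A y - c"
  have "A ((1 - t) *\<^sub>R x + t *\<^sub>R y) = (1 - t) *\<^sub>R A x + t *\<^sub>R A y"
    using assms(1) by (simp add: linear_add linear_scale)
  then have e: "A ((1 - t) *\<^sub>R x + t *\<^sub>R y) - c = (1 - t) *\<^sub>R a + t *\<^sub>R b"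
    by (simp add: a_def b_def algebra_simps)
  have "(1 - t) * (norm a)\<^sup>2 + t * (norm b)\<^sup>2 - (norm ((1 - t) *\<^sub>R a + t *\<^sub>R b))\<^sup>2
        = t * (1 - t) * (norm (a - b))\<^sup>2"
    unfolding power2_norm_eq_inner
    by (simp add: inner_add_left inner_add_right inner_diff_left inner_diff_right inner_commute
        algebra_simps power2_eq_square)
  moreover have "0 \<le> t * (1 - t) * (norm (a - b))\<^sup>2" using t by simp
  ultimately show "(norm (A ((1 - t) *\<^sub>R x + t *\<^sub>R y) - c))\<^sup>2
      \<le> (1 - t) * (norm (A x - c))\<^sup>2 + t * (norm (A y - c))\<^sup>2"
    unfolding e a_def[symmetric] b_def[symmetric] by linarith
qed

definition vi_solution :: "'a::real_inner set \<Rightarrow> ('a \<Rightarrow> 'a) \<Rightarrow> 'a \<Rightarrow> bool" where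
  "vi_solution C G x \<longleftrightarrow> x \<in> C \<and> (\<forall>w\<in>C. 0 \<le> G x \<bullet> (w - x))"

lemma strongly_monotone_gradient_step:
  fixes d e :: "'a::real_inner"
  assumes strong: "\<tau> * (norm d)\<^sup>2 \<le> e \<bullet> d" and lip: "norm e \<le> L * norm d"
    and "0 < \<tau>" "\<tau> \<le> L"
  shows "(norm (d - (\<tau> / L\<^sup>2) *\<^sub>R e))\<^sup>2 \<le> (1 - \<tau>\<^sup>2 / L\<^sup>2) * (norm d)\<^sup>2"
proof -
  define \<gamma> where "\<gamma> = \<tau> / L\<^sup>2"
  have "0 < L" "0 \<le> \<gamma>" using assms by (auto simp: \<gamma>_def)
  have "(norm (d - \<gamma> *\<^sub>R e))\<^sup>2 = (norm d)\<^sup>2 - 2 * \<gamma> * (e \<bullet> d) + \<gamma>\<^sup>2 * (norm e)\<^sup>2"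
    unfolding power2_norm_eq_inner
    by (simp add: inner_diff_left inner_diff_right inner_commute[of e d] power2_eq_square algebra_simps)
  also have "\<dots> \<le> (norm d)\<^sup>2 - 2 * \<gamma> * (\<tau> * (norm d)\<^sup>2) + \<gamma>\<^sup>2 * (L * norm d)\<^sup>2"
  proof -
    have "\<gamma>\<^sup>2 * (norm e)\<^sup>2 \<le> \<gamma>\<^sup>2 * (L * norm d)\<^sup>2"
      using lip by (intro mult_left_mono power_mono) auto
    moreover have "2 * \<gamma> * (\<tau> * (norm d)\<^sup>2) \<le> 2 * \<gamma> * (e \<bullet> d)"
      using strong \<open>0 \<le> \<gamma>\<close> by (simp add: mult_left_mono)
    ultimately show ?thesis by linarith
  qed
  also have "\<dots> = (1 - \<tau>\<^sup>2 / L\<^sup>2) * (norm d)\<^sup>2"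
    using \<open>0 < L\<close> by (simp add: \<gamma>_def field_simps power2_eq_square)
  finally show ?thesis unfolding \<gamma>_def .
qed

lemma vi_solution_if_projection_fixpoint:
  assumes "closed C" "convex C" "x \<in> C" "0 < \<gamma>" "closest_point C (x - \<gamma> *\<^sub>R G x) = x"
  shows "vi_solution C G x"
  unfolding vi_solution_def
proof (intro conjI ballI \<open>x \<in> C\<close>)
  fix w assume "w \<in> C"
  from closest_point_dot[OF assms(2,1) this, of "x - \<gamma> *\<^sub>R G x"]
  have "0 \<le> \<gamma> * (G x \<bullet> (w - x))" by (simp add: assms(5))
  then show "0 \<le> G x \<bullet> (w - x)" using \<open>0 < \<gamma>\<close> by (simp add: zero_le_mult_iff)
qed

text \<open>For a strongly monotone Lipschitz map the projected gradient step
  x \<mapsto> P (x - \<gamma> G x), with P the projection onto C, is a contraction; its fixed point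
  solves the variational inequality.\<close>
lemma vi_solution_exists:
  fixes G :: "'a::euclidean_space \<Rightarrow> 'a"
  assumes C: "closed C" "convex C" "C \<noteq> {}"
    and strong: "\<And>x y. x \<in> C \<Longrightarrow> y \<in> C \<Longrightarrow> \<tau> * (norm (x - y))\<^sup>2 \<le> (G x - G y) \<bullet> (x - y)"
    and lip: "L-lipschitz_on C G" and "0 < \<tau>"
  shows "\<exists>x. vi_solution C G x"
proof -
  define M where "M = max L \<tau>"
  have M: "0 < M" "\<tau> \<le> M" "L \<le> M" using \<open>0 < \<tau>\<close> by (auto simp: M_def)
  define \<gamma> where "\<gamma> = \<tau> / M\<^sup>2"
  define c where "c = sqrt (1 - \<tau>\<^sup>2 / M\<^sup>2)"
  have ratio: "0 < \<tau>\<^sup>2 / M\<^sup>2" "\<tau>\<^sup>2 / M\<^sup>2 \<le> 1"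
    using M \<open>0 < \<tau>\<close> by (auto simp: divide_le_eq_1 intro: power_mono)
  then have c: "0 \<le> c" "c < 1" by (auto simp: c_def)
  define P where "P = closest_point C"
  have P: "P x \<in> C" "dist (P x) (P y) \<le> dist x y" for x y
    unfolding P_def using closest_point_in_set closest_point_lipschitz C by blast+
  have step: "dist (a - \<gamma> *\<^sub>R G a) (b - \<gamma> *\<^sub>R G b) \<le> c * dist a b" if "a \<in> C" "b \<in> C" for a b
  proof -
    have "norm (G a - G b) \<le> M * norm (a - b)"
      using lipschitz_on_normD[OF lip that] M(3) by (meson mult_right_mono norm_ge_zero order_trans)
    with strong[OF that] have "(norm ((a - b) - \<gamma> *\<^sub>R (G a - G b)))\<^sup>2 \<le> (c * norm (a - b))\<^sup>2"
      using strongly_monotone_gradient_step[of \<tau> "a - b" "G a - G b" M] M \<open>0 < \<tau>\<close> ratio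
      by (simp add: \<gamma>_def c_def power_mult_distrib inner_commute)
    then have "norm ((a - b) - \<gamma> *\<^sub>R (G a - G b)) \<le> c * norm (a - b)"
      using c by (auto intro: power2_le_imp_le)
    then show ?thesis by (simp add: dist_norm algebra_simps)
  qed
  have "\<forall>x y. dist (P (P x - \<gamma> *\<^sub>R G (P x))) (P (P y - \<gamma> *\<^sub>R G (P y))) \<le> c * dist x y"
    using P step c by (meson mult_left_mono order_trans)
  from banach_fix_type[OF c this] obtain x where x: "P (P x - \<gamma> *\<^sub>R G (P x)) = x"
    by blast
  then have "x \<in> C" using P by metis
  then have "P x = x" unfolding P_def by (rule closest_point_self)
  then show ?thesis
    using x vi_solution_if_projection_fixpoint[OF C(1,2) \<open>x \<in> C\<close>, of \<gamma> G] M \<open>0 < \<tau>\<close>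
    by (auto simp: P_def \<gamma>_def)
qed

lemma vi_solution_unique:
  assumes strong: "\<And>x y. x \<in> C \<Longrightarrow> y \<in> C \<Longrightarrow> \<tau> * (norm (x - y))\<^sup>2 \<le> (G x - G y) \<bullet> (x - y)"
    and "0 < \<tau>" and "vi_solution C G s" "vi_solution C G t"
  shows "s = t"
proof -
  have "s \<in> C" "t \<in> C" "0 \<le> G s \<bullet> (t - s)" "0 \<le> G t \<bullet> (s - t)"
    using assms(3,4) by (auto simp: vi_solution_def)
  moreover have "(G s - G t) \<bullet> (s - t) = - (G s \<bullet> (t - s)) - G t \<bullet> (s - t)"
    by (simp add: inner_diff_left inner_diff_right algebra_simps)
  ultimately have "\<tau> * (norm (s - t))\<^sup>2 \<le> 0" using strong by fastforce
  then show ?thesis using \<open>0 < \<tau>\<close> by (simp add: mult_le_0_iff)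
qed

lemma vi_solution_proximal_firmly_nonexpansive:
  assumes mono: "\<And>x y. x \<in> C \<Longrightarrow> y \<in> C \<Longrightarrow> 0 \<le> (F x - F y) \<bullet> (x - y)" and "0 < \<tau>"
    and s1: "vi_solution C (\<lambda>x. F x + \<tau> *\<^sub>R (x - y1)) s1"
    and s2: "vi_solution C (\<lambda>x. F x + \<tau> *\<^sub>R (x - y2)) s2"
  shows "(norm (s1 - s2))\<^sup>2 \<le> (y1 - y2) \<bullet> (s1 - s2)"
proof -
  have "0 \<le> (F s1 + \<tau> *\<^sub>R (s1 - y1)) \<bullet> (s2 - s1)" "0 \<le> (F s2 + \<tau> *\<^sub>R (s2 - y2)) \<bullet> (s1 - s2)"
    and "0 \<le> (F s1 - F s2) \<bullet> (s1 - s2)"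
    using s1 s2 mono by (auto simp: vi_solution_def)
  then have "\<tau> * ((s1 - s2) \<bullet> (s1 - s2)) \<le> \<tau> * ((y1 - y2) \<bullet> (s1 - s2))"
    by (simp add: inner_add_left inner_diff_left inner_diff_right algebra_simps)
  then show ?thesis using \<open>0 < \<tau>\<close> by (simp add: power2_norm_eq_inner)
qed

lemma vi_solution_proximal_ex1:
  fixes F :: "'a::euclidean_space \<Rightarrow> 'a"
  assumes C: "closed C" "convex C" "C \<noteq> {}"
    and mono: "\<And>x y. x \<in> C \<Longrightarrow> y \<in> C \<Longrightarrow> 0 \<le> (F x - F y) \<bullet> (x - y)"
    and lip: "L-lipschitz_on C F" and "0 < \<tau>"
  shows "\<exists>!s. vi_solution C (\<lambda>x. F x + \<tau> *\<^sub>R (x - y)) s"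
proof -
  let ?G = "\<lambda>x. F x + \<tau> *\<^sub>R (x - y)"
  have strong: "\<tau> * (norm (x1 - x2))\<^sup>2 \<le> (?G x1 - ?G x2) \<bullet> (x1 - x2)" if "x1 \<in> C" "x2 \<in> C" for x1 x2
    using mono[OF that] by (simp add: algebra_simps inner_add_left power2_norm_eq_inner)
  have "\<tau>-lipschitz_on C (\<lambda>x. \<tau> *\<^sub>R (x - y))"
  proof (rule lipschitz_onI)
    fix x1 x2
    have "\<tau> *\<^sub>R (x1 - y) - \<tau> *\<^sub>R (x2 - y) = \<tau> *\<^sub>R (x1 - x2)" by (simp add: algebra_simps)
    then show "dist (\<tau> *\<^sub>R (x1 - y)) (\<tau> *\<^sub>R (x2 - y)) \<le> \<tau> * dist x1 x2"
      using \<open>0 < \<tau>\<close> by (simp add: dist_norm)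
  qed (use \<open>0 < \<tau>\<close> in simp)
  with lip have "(L + \<tau>)-lipschitz_on C ?G" by (rule lipschitz_on_add)
  with vi_solution_exists[OF C strong] vi_solution_unique[OF strong] \<open>0 < \<tau>\<close> show ?thesis
    by blast
qed

section \<open>Inexact Krasnosel'skii-Mann iteration\<close>

definition firmly_nonexpansive :: "('a::real_inner \<Rightarrow> 'a) \<Rightarrow> bool" where
  "firmly_nonexpansive S \<longleftrightarrow> (\<forall>x y. (norm (S x - S y))\<^sup>2 \<le> (x - y) \<bullet> (S x - S y))"

lemma firmly_nonexpansive_lipschitz:
  assumes "firmly_nonexpansive S"
  shows "1-lipschitz_on UNIV S"
proof (rule lipschitz_onI)
  fix x y
  have "(norm (S x - S y))\<^sup>2 \<le> norm (x - y) * norm (S x - S y)"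
    using assms[unfolded firmly_nonexpansive_def, rule_format, of x y]
      Cauchy_Schwarz_ineq2[of "x - y" "S x - S y"] by linarith
  then have "norm (S x - S y) \<le> norm (x - y)"
    by (cases "S x = S y") (auto simp: power2_eq_square)
  then show "dist (S x) (S y) \<le> 1 * dist x y" by (simp add: dist_norm)
qed simp

lemma firmly_nonexpansive_relaxed_step:
  assumes "firmly_nonexpansive S" "S q = q" "0 \<le> \<eta>"
  shows "(norm (x + \<eta> *\<^sub>R (S x - x) - q))\<^sup>2 \<le> (norm (x - q))\<^sup>2 - \<eta> * (2 - \<eta>) * (norm (S x - x))\<^sup>2"
proof -
  define d where "d = x - q"
  define s where "s = S x - q"
  have firm: "s \<bullet> s \<le> d \<bullet> s"
    using assms(1,2) unfolding firmly_nonexpansive_def d_def s_def by (metis power2_norm_eq_inner)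
  have eqs: "x + \<eta> *\<^sub>R (S x - x) - q = d + \<eta> *\<^sub>R (s - d)" "S x - x = s - d" "x - q = d"
    by (simp_all add: d_def s_def algebra_simps)
  have "(norm (d + \<eta> *\<^sub>R (s - d)))\<^sup>2 = (norm d)\<^sup>2 - \<eta> * (2 - \<eta>) * (norm (s - d))\<^sup>2 - 2 * \<eta> * (d \<bullet> s - s \<bullet> s)"
    unfolding power2_norm_eq_inner
    by (simp add: inner_add_left inner_add_right inner_diff_left inner_diff_right inner_commute[of s d]
        algebra_simps power2_eq_square)
  moreover have "0 \<le> \<eta> * (d \<bullet> s - s \<bullet> s)" using firm assms(3) by simp
  ultimately show ?thesis unfolding eqs(1) unfolding eqs(2,3) by linarith
qed

lemma convergent_if_quasi_decreasing:
  fixes a e :: "nat \<Rightarrow> real"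
  assumes step: "\<And>n. a (Suc n) \<le> a n + e n" and "\<And>n. 0 \<le> a n"
    and "\<And>n. 0 \<le> e n" and "summable e"
  shows "convergent a"
proof -
  define b where "b n = a n - (\<Sum>k<n. e k)" for n
  have "decseq b" unfolding decseq_Suc_iff b_def using step by (simp add: algebra_simps)
  moreover have "- (\<Sum>k. e k) \<le> b n" for n
  proof -
    have "(\<Sum>k<n. e k) \<le> (\<Sum>k. e k)"
      using assms(3) by (intro sum_le_suminf[OF \<open>summable e\<close>]) auto
    then show ?thesis using assms(2)[of n] unfolding b_def by linarith
  qed
  ultimately obtain l where "b \<longlonglongrightarrow> l" by (metis decseq_convergent)
  then have "(\<lambda>n. b n + (\<Sum>k<n. e k)) \<longlonglongrightarrow> l + (\<Sum>k. e k)"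
    using summable_LIMSEQ[OF \<open>summable e\<close>] by (rule tendsto_add)
  then show ?thesis by (auto simp: b_def convergent_def)
qed

locale inexact_krasnoselskii_mann =
  fixes S :: "'a::euclidean_space \<Rightarrow> 'a" and X Z :: "nat \<Rightarrow> 'a"
    and eps eta :: "nat \<Rightarrow> real" and Rm RM :: real
  assumes firm: "firmly_nonexpansive S"
    and eps_nonneg: "\<And>n. 0 \<le> eps n" and eps_summable: "summable eps"
    and eta_range: "\<And>n. Rm \<le> eta n \<and> eta n \<le> RM" and Rm_pos: "0 < Rm" and RM_less: "RM < 2"
    and Z_approx: "\<And>n. dist (Z n) (S (X n)) \<le> eps n"
    and X_step: "\<And>n. X (Suc n) = (1 - eta n) *\<^sub>R X n + eta n *\<^sub>R Z n"
begin

lemma dist_exact_step: "norm (X (Suc n) - (X n + eta n *\<^sub>R (S (X n) - X n))) \<le> 2 * eps n"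
proof -
  have "X (Suc n) - (X n + eta n *\<^sub>R (S (X n) - X n)) = eta n *\<^sub>R (Z n - S (X n))"
    by (simp add: X_step algebra_simps)
  moreover have "eta n * norm (Z n - S (X n)) \<le> 2 * eps n"
    using eta_range[of n] Rm_pos RM_less Z_approx[of n] eps_nonneg[of n]
    by (intro mult_mono) (auto simp: dist_norm)
  ultimately show ?thesis using eta_range[of n] Rm_pos by simp
qed

lemma exact_step_dist_fixed_point:
  assumes "S q = q"
  shows "(norm (X n + eta n *\<^sub>R (S (X n) - X n) - q))\<^sup>2
          \<le> (norm (X n - q))\<^sup>2 - Rm * (2 - RM) * (norm (S (X n) - X n))\<^sup>2"
proof -
  have "Rm * (2 - RM) \<le> eta n * (2 - eta n)"
    using eta_range[of n] Rm_pos RM_less by (intro mult_mono) auto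
  then have "Rm * (2 - RM) * (norm (S (X n) - X n))\<^sup>2 \<le> eta n * (2 - eta n) * (norm (S (X n) - X n))\<^sup>2"
    by (intro mult_right_mono) auto
  with firmly_nonexpansive_relaxed_step[OF firm assms, of "eta n" "X n"] eta_range[of n] Rm_pos
  show ?thesis by linarith
qed

lemma dist_fixed_point_step:
  assumes "S q = q"
  shows "norm (X (Suc n) - q) \<le> norm (X n - q) + 2 * eps n"
proof -
  have "0 \<le> Rm * (2 - RM) * (norm (S (X n) - X n))\<^sup>2" using Rm_pos RM_less by simp
  with exact_step_dist_fixed_point[OF assms, of n]
  have "(norm (X n + eta n *\<^sub>R (S (X n) - X n) - q))\<^sup>2 \<le> (norm (X n - q))\<^sup>2"
    by linarith
  then have "norm (X n + eta n *\<^sub>R (S (X n) - X n) - q) \<le> norm (X n - q)"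
    by (rule power2_le_imp_le) simp
  with dist_exact_step[of n] show ?thesis
    using norm_triangle_ineq[of "X (Suc n) - (X n + eta n *\<^sub>R (S (X n) - X n))"
        "X n + eta n *\<^sub>R (S (X n) - X n) - q"] by (simp add: algebra_simps)
qed

lemma convergent_dist_fixed_point:
  assumes "S q = q"
  shows "convergent (\<lambda>n. norm (X n - q))"
  by (rule convergent_if_quasi_decreasing[where e = "\<lambda>n. 2 * eps n"])
    (use dist_fixed_point_step[OF assms] eps_nonneg summable_mult[OF eps_summable, of 2] in auto)

lemma residual_tendsto_zero:
  assumes "S q = q"
  shows "(\<lambda>n. S (X n) - X n) \<longlonglongrightarrow> 0"
proof -
  obtain l where l: "(\<lambda>n. norm (X n - q)) \<longlonglongrightarrow> l"
    using convergent_dist_fixed_point[OF assms] by (auto simp: convergent_def)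
  have "0 \<le> l" using l by (rule tendsto_lowerbound) auto
  define u where "u n = ((norm (X n - q))\<^sup>2 - (max 0 (norm (X (Suc n) - q) - 2 * eps n))\<^sup>2) / (Rm * (2 - RM))" for n
  have "u \<longlonglongrightarrow> (l\<^sup>2 - (max 0 (l - 2 * 0))\<^sup>2) / (Rm * (2 - RM))"
    unfolding u_def
    by (intro tendsto_intros l LIMSEQ_Suc[OF l] summable_LIMSEQ_zero[OF eps_summable]) (use Rm_pos RM_less in auto)
  then have u0: "u \<longlonglongrightarrow> 0" using \<open>0 \<le> l\<close> by simp
  have bound: "(norm (S (X n) - X n))\<^sup>2 \<le> u n" for n
  proof -
    have "max 0 (norm (X (Suc n) - q) - 2 * eps n) \<le> norm (X n + eta n *\<^sub>R (S (X n) - X n) - q)"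
      using dist_exact_step[of n] norm_triangle_ineq[of "X (Suc n) - (X n + eta n *\<^sub>R (S (X n) - X n))"
          "X n + eta n *\<^sub>R (S (X n) - X n) - q"] by simp
    then have "(max 0 (norm (X (Suc n) - q) - 2 * eps n))\<^sup>2 \<le> (norm (X n + eta n *\<^sub>R (S (X n) - X n) - q))\<^sup>2"
      by (rule power_mono) simp
    with exact_step_dist_fixed_point[OF assms, of n]
    have "Rm * (2 - RM) * (norm (S (X n) - X n))\<^sup>2
        \<le> (norm (X n - q))\<^sup>2 - (max 0 (norm (X (Suc n) - q) - 2 * eps n))\<^sup>2"
      by linarith
    then show ?thesis
      using Rm_pos RM_less by (simp add: u_def le_divide_eq mult.commute)
  qed
  have "\<forall>\<^sub>F n in sequentially. 0 \<le> (norm (S (X n) - X n))\<^sup>2"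
    and "\<forall>\<^sub>F n in sequentially. (norm (S (X n) - X n))\<^sup>2 \<le> u n"
    using bound by simp_all
  from tendsto_sandwich[OF this tendsto_const u0]
  have "(\<lambda>n. (norm (S (X n) - X n))\<^sup>2) \<longlonglongrightarrow> 0" .
  from tendsto_real_sqrt[OF this] have "(\<lambda>n. norm (S (X n) - X n)) \<longlonglongrightarrow> 0"
    by simp
  then show ?thesis by (simp add: tendsto_norm_zero_iff)
qed

text \<open>The sequence is bounded, so it has a cluster point z; S z = z since the residuals vanish
  and S is continuous; and since the distance to the fixed point z converges, its limit is
  the limit along the subsequence, namely 0.\<close>
theorem tendsto_fixed_point:
  assumes "S q = q"
  shows "\<exists>z. S z = z \<and> X \<longlonglongrightarrow> z"
proof -
  have "bounded (range (\<lambda>n. X n - q))"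
    using convergent_dist_fixed_point[OF assms] convergent_imp_Bseq Bseq_eq_bounded
    by (metis bounded_norm_comp)
  from bounded_translation[OF this, of q] have "bounded (range X)"
    by (simp add: image_image)
  then obtain z r where r: "strict_mono r" and zr: "(X \<circ> r) \<longlonglongrightarrow> z"
    using bounded_imp_convergent_subsequence by blast
  then have zr: "(\<lambda>n. X (r n)) \<longlonglongrightarrow> z" by (simp add: o_def)
  have "(\<lambda>n. S (X (r n))) \<longlonglongrightarrow> S z"
    using continuous_on_tendsto_compose[OF lipschitz_on_continuous_on[OF firmly_nonexpansive_lipschitz[OF firm]] zr]
    by simp
  moreover have "(\<lambda>n. S (X (r n)) - X (r n)) \<longlonglongrightarrow> 0"
    using LIMSEQ_subseq_LIMSEQ[OF residual_tendsto_zero[OF assms] r] by (simp add: o_def)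
  ultimately have "(\<lambda>n. S (X (r n)) - (S (X (r n)) - X (r n))) \<longlonglongrightarrow> S z - 0"
    by (rule tendsto_diff)
  then have "(\<lambda>n. X (r n)) \<longlonglongrightarrow> S z" by simp
  from LIMSEQ_unique[OF this zr] have fix_z: "S z = z" .
  obtain l where l: "(\<lambda>n. norm (X n - z)) \<longlonglongrightarrow> l"
    using convergent_dist_fixed_point[OF fix_z] by (auto simp: convergent_def)
  have "(\<lambda>n. norm (X (r n) - z)) \<longlonglongrightarrow> l"
    using LIMSEQ_subseq_LIMSEQ[OF l r] by (simp add: o_def)
  moreover have "(\<lambda>n. norm (X (r n) - z)) \<longlonglongrightarrow> 0"
    using tendsto_norm_zero[OF LIM_zero[OF zr]] .
  ultimately have "l = 0" by (rule LIMSEQ_unique)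
  with l have "(\<lambda>n. X n - z) \<longlonglongrightarrow> 0" by (simp add: tendsto_norm_zero_iff)
  then have "X \<longlonglongrightarrow> z" by (rule LIM_zero_cancel)
  with fix_z show ?thesis by blast
qed

end

section \<open>Games with block-structured strategies\<close>

lemma linear_blk: "linear (blk p i)"
  by (rule linearI) (auto simp: blk_def vec_eq_iff)

lemma bounded_linear_blk: "bounded_linear (blk p i)"
  using linear_blk by (simp add: linear_conv_bounded_linear)

lemma has_derivative_blk: "(blk p i has_derivative blk p i) F"
  by (rule bounded_linear_imp_has_derivative[OF bounded_linear_blk])

lemma blk_diff: "blk p i (x - y) = blk p i x - blk p i y"
  and blk_add: "blk p i (x + y) = blk p i x + blk p i y"
  and blk_scaleR: "blk p i (c *\<^sub>R x) = c *\<^sub>R blk p i x"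
  and blk_blk: "blk p i (blk p i x) = blk p i x"
  and blk_blk_other: "i \<noteq> j \<Longrightarrow> blk p j (blk p i x) = 0"
  by (auto simp: blk_def vec_eq_iff)

lemma upd_eq: "upd p i x v = x - blk p i x + blk p i v"
  by (auto simp: upd_def blk_def vec_eq_iff)

lemma blk_upd: "blk p j (upd p i x v) = (if j = i then blk p i v else blk p j x)"
  by (auto simp: upd_def blk_def vec_eq_iff)

lemma inner_blk_blk: "blk p i a \<bullet> blk p i b = blk p i a \<bullet> b"
  unfolding inner_vec_def blk_def by (intro sum.cong) auto

lemma inner_pgrad:
  fixes p :: "'n::finite \<Rightarrow> 'i::finite"
  shows "pgrad p D x \<bullet> h = (\<Sum>i\<in>UNIV. D i x \<bullet> blk p i h)"
proof -
  have "(\<Sum>i\<in>UNIV. D i x \<bullet> blk p i h) = (\<Sum>i\<in>UNIV. \<Sum>k\<in>UNIV. if p k = i then D i x $ k * h $ k else 0)"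
    by (simp add: inner_vec_def blk_def if_distrib cong: if_cong)
  also have "\<dots> = (\<Sum>k\<in>UNIV. D (p k) x $ k * h $ k)"
    by (subst sum.swap) (simp add: sum.delta)
  finally show ?thesis by (simp add: pgrad_def inner_vec_def)
qed

lemma pgrad_add_blk:
  "pgrad p (\<lambda>i x. D i x + c *\<^sub>R blk p i (x - y)) = (\<lambda>x. pgrad p D x + c *\<^sub>R (x - y))"
  by (simp add: fun_eq_iff pgrad_def blk_def vec_eq_iff)

lemma lipschitz_on_bounded_matrix_derivative:
  fixes g :: "real^'n \<Rightarrow> real^'m"
  assumes "convex C" and der: "\<And>x. x \<in> C \<Longrightarrow> (g has_derivative (\<lambda>h. M x *v h)) (at x within C)"
    and bnd: "\<And>x. x \<in> C \<Longrightarrow> norm (M x) \<le> B" and "0 \<le> B"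
  shows "(real CARD('m) * real CARD('n) * B)-lipschitz_on C g"
proof -
  have "onorm (\<lambda>h. M x *v h) \<le> real CARD('m) * real CARD('n) * B" if x: "x \<in> C" for x
  proof (rule onorm_le_matrix_component)
    fix k l
    show "\<bar>M x $ k $ l\<bar> \<le> B"
      using component_le_norm_cart[of "M x $ k" l] Finite_Cartesian_Product.norm_nth_le[of "M x" k]
        bnd[OF x] by linarith
  qed
  with \<open>0 \<le> B\<close> show ?thesis
    by (intro bounded_derivative_imp_lipschitz[OF der \<open>convex C\<close>]) simp_all
qed

lemma lipschitz_on_pgrad:
  fixes p :: "'n::finite \<Rightarrow> 'i"
  assumes lip: "\<And>i. K-lipschitz_on C (Df i)"
  shows "(real CARD('n) * K)-lipschitz_on C (pgrad p Df)"
proof (rule lipschitz_onI)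
  fix x y assume xy: "x \<in> C" "y \<in> C"
  have "norm (pgrad p Df x - pgrad p Df y) \<le> (\<Sum>k\<in>UNIV. \<bar>(pgrad p Df x - pgrad p Df y) $ k\<bar>)"
    by (rule norm_le_l1_cart)
  also have "\<dots> \<le> (\<Sum>k\<in>(UNIV::'n set). K * dist x y)"
  proof (rule sum_mono)
    fix k
    have "\<bar>(pgrad p Df x - pgrad p Df y) $ k\<bar> = \<bar>(Df (p k) x - Df (p k) y) $ k\<bar>"
      by (simp add: pgrad_def)
    also have "\<dots> \<le> norm (Df (p k) x - Df (p k) y)"
      by (rule component_le_norm_cart)
    also have "\<dots> \<le> K * dist x y"
      using lipschitz_onD[OF lip xy] by (simp add: dist_norm)
    finally show "\<bar>(pgrad p Df x - pgrad p Df y) $ k\<bar> \<le> K * dist x y" .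
  qed
  finally show "dist (pgrad p Df x) (pgrad p Df y) \<le> CARD('n) * K * dist x y"
    by (simp add: dist_norm)
qed (use lipschitz_on_nonneg[OF lip] in simp)

lemma lipschitz_on_pgrad_bounded_hessian:
  fixes p :: "'n::finite \<Rightarrow> 'i::finite"
  assumes "convex C"
    and der: "\<And>i x. x \<in> C \<Longrightarrow> (Df i has_derivative (\<lambda>h. Hf i x *v h)) (at x within C)"
    and bnd: "\<And>i. bounded (Hf i ` C)"
  shows "\<exists>L. L-lipschitz_on C (pgrad p Df)"
proof -
  obtain B where "0 < B" and B: "\<And>i x. x \<in> C \<Longrightarrow> norm (Hf i x) \<le> B"
    using bounded_pos[of "\<Union>i. Hf i ` C"] bnd by (auto intro: bounded_UN)
  then have "(real CARD('n) * real CARD('n) * B)-lipschitz_on C (Df i)" for i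
    using der by (intro lipschitz_on_bounded_matrix_derivative[OF \<open>convex C\<close>]) auto
  then show ?thesis by (blast intro: lipschitz_on_pgrad)
qed

lemma has_derivative_reg_game:
  assumes "(f i has_derivative (\<lambda>h. Df i x \<bullet> h)) (at x)"
  shows "(reg_game p \<tau> y f i has_derivative (\<lambda>h. (Df i x + \<tau> *\<^sub>R blk p i (x - y)) \<bullet> h)) (at x)"
proof -
  have "((\<lambda>z. blk p i z - blk p i y) has_derivative blk p i) (at x)"
    using has_derivative_diff[OF has_derivative_blk has_derivative_const] by simp
  from has_derivative_compose[OF this has_derivative_sqnorm_at]
  have "((\<lambda>z. (norm (blk p i z - blk p i y))\<^sup>2) has_derivative
      (\<lambda>h. 2 *\<^sub>R ((blk p i x - blk p i y) \<bullet> blk p i h))) (at x)"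
    by simp
  from has_derivative_add[OF assms has_derivative_mult_right[OF this, of "\<tau> / 2"]]
  have "(reg_game p \<tau> y f i has_derivative
      (\<lambda>h. Df i x \<bullet> h + \<tau> / 2 * (2 *\<^sub>R ((blk p i x - blk p i y) \<bullet> blk p i h)))) (at x)"
    by (simp only: reg_game_def)
  moreover have "(\<lambda>h. Df i x \<bullet> h + \<tau> / 2 * (2 *\<^sub>R ((blk p i x - blk p i y) \<bullet> blk p i h)))
      = (\<lambda>h. (Df i x + \<tau> *\<^sub>R blk p i (x - y)) \<bullet> h)"
    by (simp add: fun_eq_iff inner_add_left blk_diff[symmetric] inner_blk_blk)
  ultimately show ?thesis by simp
qed

locale block_game =
  fixes p :: "'n::finite \<Rightarrow> 'i::finite" and Qi :: "'i \<Rightarrow> (real^'n) set"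
  assumes Qi_block: "\<And>i. Qi i \<subseteq> {v. blk p i v = v}"
    and Qi_ne: "\<And>i. Qi i \<noteq> {}"
    and Qi_closed: "\<And>i. closed (Qi i)"
    and Qi_convex: "\<And>i. convex (Qi i)"
begin

abbreviation "Q \<equiv> prof_set p Qi"

lemma blk_in_Qi: "x \<in> Q \<Longrightarrow> blk p i x \<in> Qi i"
  by (simp add: prof_set_def)

lemma blk_Qi: "v \<in> Qi i \<Longrightarrow> blk p i v = v"
  using Qi_block by auto

lemma upd_in_Q: "x \<in> Q \<Longrightarrow> v \<in> Qi i \<Longrightarrow> upd p i x v \<in> Q"
  by (auto simp: prof_set_def blk_upd blk_Qi)

lemma closed_Q: "closed Q"
proof -
  have "Q = (\<Inter>i. blk p i -` Qi i)" by (auto simp: prof_set_def)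
  moreover have "closed (blk p i -` Qi i)" for i
    using Qi_closed linear_continuous_on[OF bounded_linear_blk] by (rule closed_vimage)
  ultimately show ?thesis by auto
qed

lemma convex_Q: "convex Q"
  using Qi_convex unfolding prof_set_def convex_def by (auto simp: blk_add blk_scaleR)

lemma Q_nonempty: "Q \<noteq> {}"
proof -
  have "\<forall>i. \<exists>v. v \<in> Qi i" using Qi_ne by blast
  then obtain q where q: "\<And>i. q i \<in> Qi i" by metis
  have "blk p j (\<Sum>i\<in>UNIV. q i) = q j" for j
  proof -
    have "blk p j (\<Sum>i\<in>UNIV. q i) = (\<Sum>i\<in>UNIV. blk p j (q i))"
      by (rule linear_sum[OF linear_blk])
    also have "\<dots> = (\<Sum>i\<in>UNIV. if i = j then q j else 0)"
    proof (rule sum.cong)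
      fix i show "blk p j (q i) = (if i = j then q j else 0)"
        using blk_blk_other[of i j p "q i"] blk_Qi[OF q[of i]] by auto
    qed simp
    finally show ?thesis by simp
  qed
  then have "(\<Sum>i\<in>UNIV. q i) \<in> Q" using q by (simp add: prof_set_def)
  then show ?thesis by auto
qed

lemma vi_solution_pgrad_iff:
  assumes "x \<in> Q"
  shows "vi_solution Q (pgrad p Dg) x \<longleftrightarrow> (\<forall>i. \<forall>v\<in>Qi i. 0 \<le> Dg i x \<bullet> (v - blk p i x))"
proof
  assume vi: "vi_solution Q (pgrad p Dg) x"
  show "\<forall>i. \<forall>v\<in>Qi i. 0 \<le> Dg i x \<bullet> (v - blk p i x)"
  proof (intro allI ballI)
    fix i v assume v: "v \<in> Qi i"
    have "blk p j (upd p i x v - x) = (if j = i then v - blk p i x else 0)" for j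
      using v by (auto simp: blk_diff blk_upd blk_Qi)
    then have "pgrad p Dg x \<bullet> (upd p i x v - x) = (\<Sum>j\<in>UNIV. if j = i then Dg i x \<bullet> (v - blk p i x) else 0)"
      unfolding inner_pgrad by (intro sum.cong) auto
    then have "pgrad p Dg x \<bullet> (upd p i x v - x) = Dg i x \<bullet> (v - blk p i x)"
      by simp
    then show "0 \<le> Dg i x \<bullet> (v - blk p i x)"
      using vi upd_in_Q[OF assms v] unfolding vi_solution_def by metis
  qed
next
  assume blockwise: "\<forall>i. \<forall>v\<in>Qi i. 0 \<le> Dg i x \<bullet> (v - blk p i x)"
  have "0 \<le> pgrad p Dg x \<bullet> (w - x)" if "w \<in> Q" for w
    unfolding inner_pgrad blk_diff using blockwise blk_in_Qi[OF that] by (intro sum_nonneg) blast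
  with assms show "vi_solution Q (pgrad p Dg) x" by (simp add: vi_solution_def)
qed

text \<open>Player i minimizes the convex function g i \<circ> upd p i x over Qi i; upd p i x is affine with
  linear part blk p i, so its first-order condition is the i-th block of the inequality.\<close>
lemma is_NE_iff_vi_solution:
  assumes der: "\<And>i x. x \<in> Q \<Longrightarrow> (g i has_derivative (\<lambda>h. Dg i x \<bullet> h)) (at x)"
    and cvx: "\<And>i x. x \<in> Q \<Longrightarrow> convex_on (Qi i) (\<lambda>v. g i (upd p i x v))"
  shows "is_NE p Qi g x \<longleftrightarrow> vi_solution Q (pgrad p Dg) x"
proof (cases "x \<in> Q")
  case True
  have blockwise: "(\<forall>v\<in>Qi i. g i x \<le> g i (upd p i x v)) \<longleftrightarrow> (\<forall>v\<in>Qi i. 0 \<le> Dg i x \<bullet> (v - blk p i x))" for i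
  proof -
    have x: "upd p i x (blk p i x) = x" by (simp add: upd_eq blk_blk)
    have "(upd p i x has_derivative blk p i) (at (blk p i x))"
      unfolding upd_eq by (auto intro!: derivative_eq_intros has_derivative_blk)
    moreover have "(g i has_derivative (\<lambda>h. Dg i x \<bullet> h)) (at (upd p i x (blk p i x)))"
      using der[OF True] x by simp
    ultimately have "((\<lambda>v. g i (upd p i x v)) has_derivative (\<lambda>h. Dg i x \<bullet> blk p i h)) (at (blk p i x))"
      by (rule has_derivative_compose)
    from convex_min_iff_variational_inequality[OF Qi_convex blk_in_Qi[OF True] this cvx[OF True]]
    have "(\<forall>v\<in>Qi i. g i x \<le> g i (upd p i x v)) \<longleftrightarrow> (\<forall>v\<in>Qi i. 0 \<le> Dg i x \<bullet> blk p i (v - blk p i x))"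
      by (simp only: x)
    also have "\<dots> \<longleftrightarrow> (\<forall>v\<in>Qi i. 0 \<le> Dg i x \<bullet> (v - blk p i x))"
      by (intro ball_cong refl) (simp add: blk_diff blk_blk blk_Qi)
    finally show ?thesis .
  qed
  have "is_NE p Qi g x \<longleftrightarrow> (\<forall>i. \<forall>v\<in>Qi i. g i x \<le> g i (upd p i x v))"
    using True by (simp add: is_NE_def)
  also have "\<dots> \<longleftrightarrow> (\<forall>i. \<forall>v\<in>Qi i. 0 \<le> Dg i x \<bullet> (v - blk p i x))"
    by (simp only: blockwise)
  also have "\<dots> \<longleftrightarrow> vi_solution Q (pgrad p Dg) x"
    by (rule vi_solution_pgrad_iff[OF True, symmetric])
  finally show ?thesis .
next
  case False
  then show ?thesis by (simp add: is_NE_def vi_solution_def)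
qed

lemma convex_on_reg_game:
  assumes "convex_on (Qi i) (\<lambda>v. f i (upd p i x v))" and "0 \<le> \<tau>"
  shows "convex_on (Qi i) (\<lambda>v. reg_game p \<tau> y f i (upd p i x v))"
proof -
  have eq: "(\<lambda>v. reg_game p \<tau> y f i (upd p i x v))
      = (\<lambda>v. f i (upd p i x v) + \<tau> / 2 * (norm (blk p i v - blk p i y))\<^sup>2)"
    by (simp add: fun_eq_iff reg_game_def blk_upd)
  have "convex_on (Qi i) (\<lambda>v. (norm (blk p i v - blk p i y))\<^sup>2)"
    by (rule convex_on_power2_norm_linear_diff[OF linear_blk Qi_convex])
  with assms(2) have "convex_on (Qi i) (\<lambda>v. \<tau> / 2 * (norm (blk p i v - blk p i y))\<^sup>2)"
    by (intro convex_on_cmul) simp_all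
  from convex_on_add[OF assms(1) this] show ?thesis
    unfolding eq .
qed

lemma is_NE_reg_game_iff:
  assumes der: "\<And>i x. x \<in> Q \<Longrightarrow> (f i has_derivative (\<lambda>h. Df i x \<bullet> h)) (at x)"
    and cvx: "\<And>i x. x \<in> Q \<Longrightarrow> convex_on (Qi i) (\<lambda>v. f i (upd p i x v))" and "0 \<le> \<tau>"
  shows "is_NE p Qi (reg_game p \<tau> y f) s \<longleftrightarrow> vi_solution Q (\<lambda>x. pgrad p Df x + \<tau> *\<^sub>R (x - y)) s"
proof -
  have "convex_on (Qi i) (\<lambda>v. reg_game p \<tau> y f i (upd p i x v))" if "x \<in> Q" for i x
    using cvx[OF that] \<open>0 \<le> \<tau>\<close> by (rule convex_on_reg_game)
  moreover have "(reg_game p \<tau> y f i has_derivative (\<lambda>h. (Df i x + \<tau> *\<^sub>R blk p i (x - y)) \<bullet> h)) (at x)"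
    if "x \<in> Q" for i x
    using der[OF that] by (rule has_derivative_reg_game)
  ultimately have "is_NE p Qi (reg_game p \<tau> y f) s
      \<longleftrightarrow> vi_solution Q (pgrad p (\<lambda>i x. Df i x + \<tau> *\<^sub>R blk p i (x - y))) s"
    by (intro is_NE_iff_vi_solution)
  then show ?thesis by (simp only: pgrad_add_blk)
qed

end

theorem mainTheorem8:
  fixes p :: "'n::finite \<Rightarrow> 'i::finite"
    and Qi :: "'i \<Rightarrow> (real^'n) set"
    and f :: "'i \<Rightarrow> real^'n \<Rightarrow> real"
    and Df :: "'i \<Rightarrow> real^'n \<Rightarrow> real^'n"
    and Hf :: "'i \<Rightarrow> real^'n \<Rightarrow> real^'n^'n"
    and U :: "(real^'n) set"
    and \<tau> Rm RM :: real
    and eps eta :: "nat \<Rightarrow> real"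
    and X Z :: "nat \<Rightarrow> real^'n"
  assumes blocks: "surj p"
    and Qi_block: "\<And>i. Qi i \<subseteq> {v. blk p i v = v}"
    and Qi_ne: "\<And>i. Qi i \<noteq> {}"
    and Qi_closed: "\<And>i. closed (Qi i)"
    and Qi_convex: "\<And>i. convex (Qi i)"
    and U_open: "open U"
    and Q_sub_U: "prof_set p Qi \<subseteq> U"
    and f_deriv: "\<And>i x. x \<in> U \<Longrightarrow> (f i has_derivative (\<lambda>h. Df i x \<bullet> h)) (at x)"
    and Df_deriv: "\<And>i x. x \<in> U \<Longrightarrow> (Df i has_derivative (\<lambda>h. Hf i x *v h)) (at x)"
    and Hf_cont: "\<And>i. continuous_on U (Hf i)"
    and Df_bdd: "\<And>i. bounded (Df i ` prof_set p Qi)"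
    and Hf_bdd: "\<And>i. bounded (Hf i ` prof_set p Qi)"
    and f_convex: "\<And>i x. x \<in> prof_set p Qi \<Longrightarrow> convex_on (Qi i) (\<lambda>v. f i (upd p i x v))"
    and F_mono: "\<forall>x\<in>prof_set p Qi. \<forall>y\<in>prof_set p Qi.
                   0 \<le> (pgrad p Df x - pgrad p Df y) \<bullet> (x - y)"
    and NE_exists: "\<exists>x. is_NE p Qi f x"
    and tau_pos: "\<tau> > 0"
    and P_mat: "P_matrix (Upsilon p (prof_set p Qi) (\<lambda>x. pjac p Hf x + \<tau> *\<^sub>R mat 1))"
    and eps_nonneg: "\<And>n. eps n \<ge> 0"
    and eps_summable: "summable eps"
    and Rm_pos: "0 < Rm" and Rm_le_RM: "Rm \<le> RM" and RM_lt2: "RM < 2"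
    and eta_range: "\<And>n. Rm \<le> eta n \<and> eta n \<le> RM"
    and X0: "X 0 \<in> prof_set p Qi"
    and Z_approx: "\<And>n. dist (Z n) (THE s. is_NE p Qi (reg_game p \<tau> (X n) f) s) \<le> eps n"
    and X_step: "\<And>n. X (Suc n) = (1 - eta n) *\<^sub>R X n + eta n *\<^sub>R Z n"
  shows "\<exists>xs. is_NE p Qi f xs \<and> X \<longlonglongrightarrow> xs"
proof -
  interpret block_game p Qi
    using Qi_block Qi_ne Qi_closed Qi_convex by unfold_locales
  have f_der: "\<And>i x. x \<in> Q \<Longrightarrow> (f i has_derivative (\<lambda>h. Df i x \<bullet> h)) (at x)"
    using f_deriv Q_sub_U by blast
  obtain L where "L-lipschitz_on Q (pgrad p Df)"
    using lipschitz_on_pgrad_bounded_hessian[OF convex_Q _ Hf_bdd] Df_deriv Q_sub_U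
    by (meson has_derivative_at_withinI subsetD)
  then have ex1: "\<exists>!s. vi_solution Q (\<lambda>x. pgrad p Df x + \<tau> *\<^sub>R (x - y)) s" for y
    using vi_solution_proximal_ex1[OF closed_Q convex_Q Q_nonempty] F_mono tau_pos by blast
  define S where "S y = (THE s. is_NE p Qi (reg_game p \<tau> y f) s)" for y
  have S: "vi_solution Q (\<lambda>x. pgrad p Df x + \<tau> *\<^sub>R (x - y)) (S y)" for y
    using theI'[OF ex1[of y]] is_NE_reg_game_iff[OF f_der f_convex] tau_pos by (simp add: S_def)
  have "firmly_nonexpansive S"
    unfolding firmly_nonexpansive_def
    using vi_solution_proximal_firmly_nonexpansive[OF _ tau_pos S S] F_mono by blast
  then interpret inexact_krasnoselskii_mann S X Z eps eta Rm RM
    using eps_nonneg eps_summable eta_range Rm_pos RM_lt2 X_step Z_approx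
    by unfold_locales (simp_all add: S_def)
  have fixed_point_iff: "S x = x \<longleftrightarrow> is_NE p Qi f x" for x
    using S[of x] ex1[of x] is_NE_iff_vi_solution[OF f_der f_convex] by (auto simp: vi_solution_def)
  obtain q where "S q = q" using NE_exists fixed_point_iff by blast
  with tendsto_fixed_point fixed_point_iff show ?thesis by blast
qed

end
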